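(* For every $n\ge1$ and every $\nu\in\{0,\dots,n-1\}$, $$\int_{S_1}t^\nu\,\Psi_{2n}(t)\,s_2(t)\,dt=0\qquad\text{and}\qquad \int_{S_1}t^\nu\,\Psi_{2n+1}(t)\,s_2(t)\,dt=0.$$
   Context: Fix real numbers $0<\alpha<\infty$ and $0<a<b<\infty$, and let $\omega=e^{2\pi i/3}$. Let $S_0=\bigcup_{k=0}^{2}\omega^k[0,\alpha]$ and $S_1=\bigcup_{k=0}^{2}\omega^k[-b,-a]$. Let $s_1:S_0\to\mathbb{C}$ satisfy $s_1\ge 0$ on $(0,\alpha)$, $s_1\in L^1(0,\alpha)$, $s_1$ not a.e. zero on $(0,\alpha)$, and $s_1(\omega z)=\omega^2 s_1(z)$ for $z\in S_0\setminus\{0,\alpha,\omega\alpha,\omega^2\alpha\}$. For a function $g$ on $S_0$, $\int_{S_0}g(t)s_1(t)\,dt$ denotes the complex line integral along the three segments oriented from $0$ outward; it equals $\sum_{k=0}^{2}\int_0^\alpha g(\omega^k x)s_1(x)\,dx$. Let $s_2\ge 0$ be integrable on $[-b,-a]$ and not a.e. zero; extend $s_2$ to $S_1$ by $s_2(\omega z)=\omega^2s_2(z)$, and for a function $g$ on $S_1$ let $\int_{S_1}g(t)s_2(t)\,dt$ be the complex line integral along the three segments $\omega^k[-b,-a]$ (parametrized by $t=\omega^k x$, $x$ from $-b$ to $-a$), which equals $\sum_{k=0}^2\int_{-b}^{-a}g(\omega^kx)s_2(x)\,dx$. Put $f(z)=z^2\int_{-b}^{-a}\frac{s_2(t)}{z^3-t^3}\,dt$.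 For $n\ge0$, $Q_n$ denotes the monic polynomial of lowest degree such that $\int_{S_0}Q_{2n}(t)t^ks_1(t)dt=0$ and $\int_{S_0}Q_{2n}(t)t^kf(t)s_1(t)dt=0$ for $0\le k\le n-1$; and $\int_{S_0}Q_{2n+1}(t)t^ks_1(t)dt=0$ for $0\le k\le n$, $\int_{S_0}Q_{2n+1}(t)t^kf(t)s_1(t)dt=0$ for $0\le k\le n-1$. The functions of second type are $\Psi_n(z)=\int_{S_0}\frac{Q_n(t)}{t-z}s_1(t)\,dt$, $z\in\mathbb{C}\setminus S_0$. *)

theory Defs
  imports "HOL-Analysis.Analysis" "HOL-Computational_Algebra.Polynomial"
begin

definition omega :: complex where
  "omega = cis (2 * pi / 3)"

text \<open>Integral over S0 against s1 (s1 given by its values on (0,alpha); extended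
  to S0 by s1(omega z) = omega^2 s1(z)):
  int_{S0} g(t) s1(t) dt = sum_{k=0}^{2} int_0^alpha g(omega^k x) s1(x) dx.\<close>
definition S0_int :: "real \<Rightarrow> (real \<Rightarrow> real) \<Rightarrow> (complex \<Rightarrow> complex) \<Rightarrow> complex" where
  "S0_int \<alpha> s1 g = (\<Sum>k<3::nat. set_lebesgue_integral lborel {0..\<alpha>}
       (\<lambda>x. g (omega ^ k * complex_of_real x) * complex_of_real (s1 x)))"

definition S1_int :: "real \<Rightarrow> real \<Rightarrow> (real \<Rightarrow> real) \<Rightarrow> (complex \<Rightarrow> complex) \<Rightarrow> complex" where
  "S1_int a b s2 g = (\<Sum>k<3::nat. set_lebesgue_integral lborel {-b..-a}
       (\<lambda>x. g (omega ^ k * complex_of_real x) * complex_of_real (s2 x)))"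

definition f_fun :: "real \<Rightarrow> real \<Rightarrow> (real \<Rightarrow> real) \<Rightarrow> complex \<Rightarrow> complex" where
  "f_fun a b s2 z = z ^ 2 * set_lebesgue_integral lborel {-b..-a}
       (\<lambda>t. complex_of_real (s2 t) / (z ^ 3 - complex_of_real t ^ 3))"

definition Q_even_cond :: "real \<Rightarrow> real \<Rightarrow> real \<Rightarrow> (real \<Rightarrow> real) \<Rightarrow> (real \<Rightarrow> real)
    \<Rightarrow> nat \<Rightarrow> complex poly \<Rightarrow> bool" where
  "Q_even_cond \<alpha> a b s1 s2 n q \<longleftrightarrow> lead_coeff q = 1 \<and>
     (\<forall>k<n. S0_int \<alpha> s1 (\<lambda>t. poly q t * t ^ k) = 0) \<and>
     (\<forall>k<n. S0_int \<alpha> s1 (\<lambda>t. poly q t * t ^ k * f_fun a b s2 t) = 0)"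

definition Q_odd_cond :: "real \<Rightarrow> real \<Rightarrow> real \<Rightarrow> (real \<Rightarrow> real) \<Rightarrow> (real \<Rightarrow> real)
    \<Rightarrow> nat \<Rightarrow> complex poly \<Rightarrow> bool" where
  "Q_odd_cond \<alpha> a b s1 s2 n q \<longleftrightarrow> lead_coeff q = 1 \<and>
     (\<forall>k\<le>n. S0_int \<alpha> s1 (\<lambda>t. poly q t * t ^ k) = 0) \<and>
     (\<forall>k<n. S0_int \<alpha> s1 (\<lambda>t. poly q t * t ^ k * f_fun a b s2 t) = 0)"

definition is_Q_even where
  "is_Q_even \<alpha> a b s1 s2 n q \<longleftrightarrow> Q_even_cond \<alpha> a b s1 s2 n q \<and>
     (\<forall>p. Q_even_cond \<alpha> a b s1 s2 n p \<longrightarrow> degree q \<le> degree p)"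

definition is_Q_odd where
  "is_Q_odd \<alpha> a b s1 s2 n q \<longleftrightarrow> Q_odd_cond \<alpha> a b s1 s2 n q \<and>
     (\<forall>p. Q_odd_cond \<alpha> a b s1 s2 n p \<longrightarrow> degree q \<le> degree p)"

definition Psi :: "real \<Rightarrow> (real \<Rightarrow> real) \<Rightarrow> complex poly \<Rightarrow> complex \<Rightarrow> complex" where
  "Psi \<alpha> s1 q z = S0_int \<alpha> s1 (\<lambda>t. poly q t / (t - z))"

end

theory Submission
  imports Defs
begin

(* For Q orthogonal to 1, t, ..., t^(nu-1), the polynomial part of
   t^nu / (u - t) integrates to zero, so  t^nu Psi(t) = int_{S0} Q(u) u^nu / (u - t) s1(u) du
   (moment_shift).  Exchanging the two integrals (ray_int_swap, a Fubini argument for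
   continuous kernels on compact sets) leaves, for fixed u, the sum over the three rotations
   of int 1/(u - omega^j y) s2(y) dy, which by the partial fraction identity
   sum_j 1/(u - omega^j y) = 3 u^2 / (u^3 - y^3) equals 3 f(u) (ray_int_cauchy_kernel).
   Hence the S1-moment of t^nu Psi equals 3 int_{S0} Q(u) u^nu f(u) s1(u) du, which vanishes
   by the second family of orthogonality conditions. *)

section \<open>Cube roots of unity\<close>

lemma omega_cube: "omega ^ 3 = 1"
proof -
  have "omega ^ 3 = cis (real 3 * (2 * pi / 3))"
    unfolding omega_def by (rule Complex.DeMoivre)
  also have "real 3 * (2 * pi / 3) = 2 * pi" by simp
  finally show ?thesis by (simp add: complex_eq_iff)
qed

lemma omega_ne_1: "omega \<noteq> 1"
proof
  assume "omega = 1"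
  hence "Re omega = 1" by simp
  thus False unfolding omega_def using cos_120 by simp
qed

lemma omega_root_sum: "1 + omega + omega^2 = 0"
proof -
  have "(omega - 1) * (1 + omega + omega^2) = omega^3 - 1" by algebra
  also have "\<dots> = 0" by (simp add: omega_cube)
  finally show ?thesis using omega_ne_1 by simp
qed

lemma cube_rotation: "(omega ^ k * z) ^ 3 = z ^ 3"
proof -
  have "(omega ^ k) ^ 3 = 1"
    by (metis omega_cube power_mult mult.commute power_one)
  thus ?thesis by (simp add: power_mult_distrib)
qed

text \<open>Partial fractions over the three rotations:
  \<open>\<Sum>j. 1/(u - omega^j y) = 3 u^2 / (u^3 - y^3)\<close>; this is what turns the kernel of
  \<open>Psi\<close>, summed over the three rays of \<open>S1\<close>, into the kernel of \<open>f\<close>.\<close>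
lemma rotation_partial_fractions:
  fixes u y :: complex
  assumes "u ^ 3 \<noteq> y ^ 3"
  shows "(\<Sum>j<3::nat. 1 / (u - omega ^ j * y)) = 3 * u^2 / (u^3 - y^3)"
proof -
  have w: "1 + omega + omega^2 = 0" by (rule omega_root_sum)
  have factor: "u^3 - y^3 = (u - y) * (u - omega * y) * (u - omega^2 * y)"
    using w by algebra
  have numer: "(u - omega * y) * (u - omega^2 * y) + (u - y) * (u - omega^2 * y)
      + (u - y) * (u - omega * y) = 3 * u^2"
    using w by algebra
  from assms factor have nonzero: "u - y \<noteq> 0" "u - omega * y \<noteq> 0" "u - omega^2 * y \<noteq> 0"
    by auto
  have common_denominator: "\<And>d0 d1 d2 :: complex. d0 \<noteq> 0 \<Longrightarrow> d1 \<noteq> 0 \<Longrightarrow> d2 \<noteq> 0 \<Longrightarrow>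
      1 / d0 + 1 / d1 + 1 / d2 = (d1 * d2 + d0 * d2 + d0 * d1) / (d0 * d1 * d2)"
    by (simp add: field_simps)
  have "(\<Sum>j<3::nat. 1 / (u - omega ^ j * y))
      = 1 / (u - y) + 1 / (u - omega * y) + 1 / (u - omega^2 * y)"
    by (simp add: numeral_3_eq_3 lessThan_Suc power2_eq_square add_ac)
  also have "\<dots> = 3 * u^2 / (u^3 - y^3)"
    unfolding common_denominator[OF nonzero] numer factor ..
  finally show ?thesis .
qed

section \<open>Rays and integrals over them\<close>

text \<open>The star \<open>rays A = \<Union>k. omega^k A\<close>; \<open>S0 = rays [0,alpha]\<close>, \<open>S1 = rays [-b,-a]\<close>.\<close>
definition rays :: "real set \<Rightarrow> complex set" where
  "rays A = {omega ^ k * complex_of_real x | k x. x \<in> A}"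

text \<open>The line integral over \<open>rays A\<close> against the weight \<open>s\<close> (extended by
  \<open>s(omega z) = omega^2 s(z)\<close>), written with the weight cut off outside \<open>A\<close>.\<close>
definition ray_int :: "real set \<Rightarrow> (real \<Rightarrow> real) \<Rightarrow> (complex \<Rightarrow> complex) \<Rightarrow> complex" where
  "ray_int A s g = (\<Sum>k<3::nat. \<integral>x. g (omega ^ k * complex_of_real x)
                        * complex_of_real (indicator A x * s x) \<partial>lborel)"

lemma ray_memberI: "x \<in> A \<Longrightarrow> omega ^ k * complex_of_real x \<in> rays A"
  unfolding rays_def by blast

lemma rays_cube: "u \<in> rays A \<Longrightarrow> \<exists>x\<in>A. u ^ 3 = complex_of_real (x ^ 3)"
  unfolding rays_def by (auto simp: cube_rotation)

text \<open>A star on the nonnegative axis and one on the negative axis are separated by cubes;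
  in particular the Cauchy kernel \<open>1/(u - t)\<close> has no singularity on \<open>S0 \<times> S1\<close>.\<close>
lemma rays_cubes_differ:
  assumes "A \<subseteq> {0..}" "B \<subseteq> {..<0}" "u \<in> rays A" "t \<in> rays B"
  shows "u ^ 3 \<noteq> t ^ 3"
proof -
  obtain x y where "x \<in> A" "y \<in> B" "u^3 = complex_of_real (x^3)" "t^3 = complex_of_real (y^3)"
    using rays_cube assms(3,4) by metis
  moreover have "y ^ 3 < 0 \<and> 0 \<le> x ^ 3"
    using assms(1,2) \<open>x \<in> A\<close> \<open>y \<in> B\<close> by (auto simp: power_less_zero_eq)
  ultimately show ?thesis by (metis not_less of_real_eq_iff)
qed

lemma S0_int_eq_ray_int: "S0_int \<alpha> s1 g = ray_int {0..\<alpha>} s1 g"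
  unfolding S0_int_def ray_int_def set_lebesgue_integral_def
  by (intro sum.cong refl Bochner_Integration.integral_cong) (auto simp: indicator_def)

lemma S1_int_eq_ray_int: "S1_int a b s2 g = ray_int {-b..-a} s2 g"
  unfolding S1_int_def ray_int_def set_lebesgue_integral_def
  by (intro sum.cong refl Bochner_Integration.integral_cong) (auto simp: indicator_def)

lemma f_fun_eq: "f_fun a b s2 z = z ^ 2 *
    (\<integral>y. complex_of_real (indicator {-b..-a} y * s2 y) / (z ^ 3 - complex_of_real y ^ 3) \<partial>lborel)"
  unfolding f_fun_def set_lebesgue_integral_def
  by (intro arg_cong2[where f = "(*)"] refl Bochner_Integration.integral_cong)
     (auto simp: indicator_def)

lemma ray_int_cong:
  assumes "\<And>u. u \<in> rays A \<Longrightarrow> g u = h u"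
  shows "ray_int A s g = ray_int A s h"
  unfolding ray_int_def
proof (intro sum.cong refl Bochner_Integration.integral_cong)
  fix k :: nat and x :: real
  show "g (omega ^ k * complex_of_real x) * complex_of_real (indicator A x * s x)
      = h (omega ^ k * complex_of_real x) * complex_of_real (indicator A x * s x)"
    by (cases "x \<in> A") (simp_all add: assms ray_memberI)
qed

lemma ray_int_cmult: "ray_int A s (\<lambda>u. c * g u) = c * ray_int A s g"
  unfolding ray_int_def sum_distrib_left by (simp add: mult.assoc)

section \<open>Integrability and Fubini for continuous kernels\<close>

lemma integrable_closed_interval:
  assumes "set_integrable lborel {l<..<r} (s :: real \<Rightarrow> real)"
  shows "integrable lborel (\<lambda>x. indicator {l..r} x * s x)"
proof -
  have "integrable lborel (\<lambda>x. indicator {l<..<r} x * s x)"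
    using assms unfolding set_integrable_def by simp
  moreover have "integrable lborel (\<lambda>x. indicator {l<..<r} x * s x) \<longleftrightarrow>
      integrable lborel (\<lambda>x. indicator {l..r} x * s x)"
    by (rule integrable_discrete_difference[where X = "{l, r}"]) (auto simp: indicator_def)
  ultimately show ?thesis by simp
qed

lemma integrable_continuous_times_weight:
  fixes h :: "real \<Rightarrow> complex" and s :: "real \<Rightarrow> real"
  assumes w: "integrable lborel (\<lambda>x. indicator A x * s x)" and A: "compact A"
    and h: "continuous_on A h"
  shows "integrable lborel (\<lambda>x. h x * complex_of_real (indicator A x * s x))"
proof -
  obtain C where C: "\<forall>x\<in>A. norm (h x) \<le> C"
    using compact_imp_bounded[OF compact_continuous_image[OF h A]] unfolding bounded_iff by auto
  have cut_off: "(\<lambda>x. h x * complex_of_real (indicator A x * s x)) =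
      (\<lambda>x. (indicator A x *\<^sub>R h x) * complex_of_real (indicator A x * s x))"
    by (auto simp: indicator_def fun_eq_iff)
  have "(\<lambda>x. indicator A x *\<^sub>R h x) \<in> borel_measurable borel"
    by (rule borel_measurable_continuous_on_indicator) (auto intro: borel_compact A h)
  moreover have "(\<lambda>x. complex_of_real (indicator A x * s x)) \<in> borel_measurable borel"
    using borel_measurable_integrable[OF w] by measurable
  ultimately have meas: "(\<lambda>x. h x * complex_of_real (indicator A x * s x)) \<in> borel_measurable lborel"
    unfolding cut_off measurable_lborel2 by (rule borel_measurable_times)
  have bound: "norm (h x * complex_of_real (indicator A x * s x)) \<le> norm (C * (indicator A x * s x))"
    for x
  proof (cases "x \<in> A")
    case True
    then have "norm (h x) * \<bar>s x\<bar> \<le> \<bar>C\<bar> * \<bar>s x\<bar>"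
      using C by (intro mult_right_mono) force+
    then show ?thesis using True by (simp add: norm_mult abs_mult)
  qed simp
  show ?thesis
  proof (rule Bochner_Integration.integrable_bound[where f = "\<lambda>x. C * (indicator A x * s x)"])
    show "integrable lborel (\<lambda>x. C * (indicator A x * s x))" using w by simp
  qed (use meas bound in auto)
qed

lemma integrable_tensor_weight:
  fixes w1 w2 :: "real \<Rightarrow> real"
  assumes w1: "integrable lborel w1" and w2: "integrable lborel w2"
  shows "integrable (lborel \<Otimes>\<^sub>M lborel) (\<lambda>p. \<bar>w1 (fst p)\<bar> * \<bar>w2 (snd p)\<bar>)"
proof (rule lborel_pair.Fubini_integrable)
  show "(\<lambda>p. \<bar>w1 (fst p)\<bar> * \<bar>w2 (snd p)\<bar>) \<in> borel_measurable (lborel \<Otimes>\<^sub>M lborel)"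
    using borel_measurable_integrable[OF w1] borel_measurable_integrable[OF w2] by measurable
  have "integrable lborel (\<lambda>x. \<bar>w1 x\<bar> * (\<integral>y. \<bar>w2 y\<bar> \<partial>lborel))"
    using w1 by (intro integrable_mult_left integrable_abs)
  then show "integrable lborel (\<lambda>x. \<integral>y. norm (\<bar>w1 (fst (x, y))\<bar> * \<bar>w2 (snd (x, y))\<bar>) \<partial>lborel)"
    by (simp add: abs_mult)
  show "AE x in lborel. integrable lborel (\<lambda>y. \<bar>w1 (fst (x, y))\<bar> * \<bar>w2 (snd (x, y))\<bar>)"
    using w2 by (intro AE_I2) (simp add: integrable_mult_right integrable_abs)
qed

lemma fubini_continuous_kernel:
  fixes H :: "real \<Rightarrow> real \<Rightarrow> complex" and s1 s2 :: "real \<Rightarrow> real" and A B :: "real set"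
  defines "w1 \<equiv> \<lambda>x. indicator A x * s1 x" and "w2 \<equiv> \<lambda>y. indicator B y * s2 y"
  assumes i1: "integrable lborel w1" and i2: "integrable lborel w2"
    and A: "compact A" and B: "compact B"
    and H: "continuous_on (A \<times> B) (\<lambda>p. H (fst p) (snd p))"
  shows "integrable lborel (\<lambda>y. (\<integral>x. H x y * complex_of_real (w1 x) \<partial>lborel) * complex_of_real (w2 y))"
    and "integrable lborel (\<lambda>x. (\<integral>y. H x y * complex_of_real (w2 y) \<partial>lborel) * complex_of_real (w1 x))"
    and "(\<integral>y. (\<integral>x. H x y * complex_of_real (w1 x) \<partial>lborel) * complex_of_real (w2 y) \<partial>lborel) =
         (\<integral>x. (\<integral>y. H x y * complex_of_real (w2 y) \<partial>lborel) * complex_of_real (w1 x) \<partial>lborel)"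
proof -
  define F where "F = (\<lambda>x y. H x y * complex_of_real (w1 x) * complex_of_real (w2 y))"
  have [measurable]: "w1 \<in> borel_measurable lborel" "w2 \<in> borel_measurable lborel"
    using i1 i2 by auto
  obtain C where C: "\<forall>p\<in>A \<times> B. norm (H (fst p) (snd p)) \<le> C"
    using compact_imp_bounded[OF compact_continuous_image[OF H compact_Times[OF A B]]]
    unfolding bounded_iff by auto
  have "(\<lambda>p. indicator (A \<times> B) p *\<^sub>R H (fst p) (snd p)) \<in> borel_measurable (borel :: (real \<times> real) measure)"
    by (rule borel_measurable_continuous_on_indicator) (auto intro: borel_compact compact_Times A B H)
  then have cut_H_meas: "(\<lambda>p. indicator (A \<times> B) p *\<^sub>R H (fst p) (snd p)) \<in> borel_measurable (lborel \<Otimes>\<^sub>M lborel)"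
    by (subst lborel_prod) simp
  have F_cut: "case_prod F = (\<lambda>p. (indicator (A \<times> B) p *\<^sub>R H (fst p) (snd p))
      * complex_of_real (w1 (fst p)) * complex_of_real (w2 (snd p)))"
    by (auto simp: F_def w1_def w2_def fun_eq_iff indicator_def)
  have F_bound: "norm (case_prod F p) \<le> norm (C * (\<bar>w1 (fst p)\<bar> * \<bar>w2 (snd p)\<bar>))" for p
  proof (cases "p \<in> A \<times> B")
    case True
    then have "norm (H (fst p) (snd p)) * (\<bar>w1 (fst p)\<bar> * \<bar>w2 (snd p)\<bar>)
        \<le> C * (\<bar>w1 (fst p)\<bar> * \<bar>w2 (snd p)\<bar>)"
      using C by (intro mult_right_mono) auto
    then show ?thesis by (cases p) (simp add: F_def norm_mult mult.assoc)
  next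
    case False
    then show ?thesis by (cases p) (auto simp: F_def w1_def w2_def indicator_def)
  qed
  have "case_prod F \<in> borel_measurable (lborel \<Otimes>\<^sub>M lborel)"
    unfolding F_cut using cut_H_meas by measurable
  then have intF: "integrable (lborel \<Otimes>\<^sub>M lborel) (case_prod F)"
    using F_bound
    by (intro Bochner_Integration.integrable_bound[OF integrable_mult_right[OF integrable_tensor_weight[OF i1 i2], of C]]) auto
  have inner_x: "(\<integral>x. F x y \<partial>lborel) = (\<integral>x. H x y * complex_of_real (w1 x) \<partial>lborel) * complex_of_real (w2 y)" for y
    unfolding F_def by simp
  have inner_y: "(\<integral>y. F x y \<partial>lborel) = (\<integral>y. H x y * complex_of_real (w2 y) \<partial>lborel) * complex_of_real (w1 x)" for x
  proof -
    have "(\<lambda>y. F x y) = (\<lambda>y. H x y * complex_of_real (w2 y) * complex_of_real (w1 x))"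
      unfolding F_def by (auto simp: fun_eq_iff mult_ac)
    then show ?thesis by simp
  qed
  show "integrable lborel (\<lambda>y. (\<integral>x. H x y * complex_of_real (w1 x) \<partial>lborel) * complex_of_real (w2 y))"
    using lborel_pair.integrable_snd[OF intF] unfolding inner_x .
  show "integrable lborel (\<lambda>x. (\<integral>y. H x y * complex_of_real (w2 y) \<partial>lborel) * complex_of_real (w1 x))"
    using lborel_pair.integrable_fst[OF intF] unfolding inner_y .
  show "(\<integral>y. (\<integral>x. H x y * complex_of_real (w1 x) \<partial>lborel) * complex_of_real (w2 y) \<partial>lborel) =
        (\<integral>x. (\<integral>y. H x y * complex_of_real (w2 y) \<partial>lborel) * complex_of_real (w1 x) \<partial>lborel)"
    using lborel_pair.Fubini_integral[OF intF] unfolding inner_x inner_y .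
qed

context
  fixes A :: "real set" and s :: "real \<Rightarrow> real"
  assumes compact_A: "compact A"
    and weight_integrable: "integrable lborel (\<lambda>x. indicator A x * s x)"
begin

lemma ray_integrable:
  assumes "continuous_on (rays A) g"
  shows "integrable lborel (\<lambda>x. g (omega ^ k * complex_of_real x) * complex_of_real (indicator A x * s x))"
proof (rule integrable_continuous_times_weight[OF weight_integrable compact_A])
  show "continuous_on A (\<lambda>x. g (omega ^ k * complex_of_real x))"
    by (rule continuous_on_compose2[OF assms]) (auto intro!: continuous_intros ray_memberI)
qed

lemma ray_int_diff:
  assumes "continuous_on (rays A) g" "continuous_on (rays A) h"
  shows "ray_int A s (\<lambda>u. g u - h u) = ray_int A s g - ray_int A s h"
  unfolding ray_int_def sum_subtractf[symmetric] left_diff_distrib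
  using ray_integrable[OF assms(1)] ray_integrable[OF assms(2)] by (simp add: integral_diff)

lemma ray_int_sum:
  assumes "finite I" "\<And>i. i \<in> I \<Longrightarrow> continuous_on (rays A) (g i)"
  shows "ray_int A s (\<lambda>u. \<Sum>i\<in>I. g i u) = (\<Sum>i\<in>I. ray_int A s (g i))"
  unfolding ray_int_def sum_distrib_right
  using assms ray_integrable by (subst sum.swap) (simp add: integral_sum)

end

lemma ray_int_swap:
  fixes K :: "complex \<Rightarrow> complex \<Rightarrow> complex"
  assumes A: "compact A" and B: "compact B"
    and i1: "integrable lborel (\<lambda>x. indicator A x * s1 x)"
    and i2: "integrable lborel (\<lambda>y. indicator B y * s2 y)"
    and K: "continuous_on (rays A \<times> rays B) (\<lambda>p. K (fst p) (snd p))"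
  shows "ray_int B s2 (\<lambda>t. ray_int A s1 (\<lambda>u. K u t)) = ray_int A s1 (\<lambda>u. ray_int B s2 (\<lambda>t. K u t))"
proof -
  define H where "H = (\<lambda>k j x y. K (omega ^ k * complex_of_real x) (omega ^ (j::nat) * complex_of_real y))"
  define w1 where "w1 = (\<lambda>x. complex_of_real (indicator A x * s1 x))"
  define w2 where "w2 = (\<lambda>y. complex_of_real (indicator B y * s2 y))"
  have "continuous_on (A \<times> B) (\<lambda>p. H k j (fst p) (snd p))" for k j :: nat
    unfolding H_def
    by (rule continuous_on_compose2[OF K, where f = "\<lambda>p. (omega ^ k * complex_of_real (fst p), omega ^ j * complex_of_real (snd p))", simplified])
       (auto intro!: continuous_intros ray_memberI)
  note fubini = fubini_continuous_kernel[OF i1 i2 A B this]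
  have "ray_int B s2 (\<lambda>t. ray_int A s1 (\<lambda>u. K u t))
      = (\<Sum>j<3. \<Sum>k<3. \<integral>y. (\<integral>x. H k j x y * w1 x \<partial>lborel) * w2 y \<partial>lborel)"
    unfolding ray_int_def H_def w1_def w2_def sum_distrib_right
    using fubini(1) unfolding H_def by (simp add: integral_sum)
  also have "\<dots> = (\<Sum>j<3. \<Sum>k<3. \<integral>x. (\<integral>y. H k j x y * w2 y \<partial>lborel) * w1 x \<partial>lborel)"
    unfolding w1_def w2_def fubini(3) ..
  also have "\<dots> = ray_int A s1 (\<lambda>u. ray_int B s2 (\<lambda>t. K u t))"
    unfolding ray_int_def H_def w1_def w2_def sum_distrib_right
    using fubini(2) unfolding H_def by (subst sum.swap) (simp add: integral_sum)
  finally show ?thesis .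
qed

text \<open>If \<open>Q\<close> is orthogonal to \<open>1, \<dots>, u^(nu-1)\<close>, then multiplying the Cauchy transform
  of \<open>Q\<close> by \<open>t^nu\<close> amounts to multiplying \<open>Q\<close> by \<open>u^nu\<close> under the integral: the
  difference is a polynomial combination of those moments.\<close>
lemma moment_shift:
  fixes Q :: "complex poly"
  assumes A: "compact A" and w: "integrable lborel (\<lambda>x. indicator A x * s x)"
    and t: "t \<notin> rays A"
    and orth: "\<And>i. i < \<nu> \<Longrightarrow> ray_int A s (\<lambda>u. poly Q u * u ^ i) = 0"
  shows "t ^ \<nu> * ray_int A s (\<lambda>u. poly Q u / (u - t)) = ray_int A s (\<lambda>u. poly Q u * u ^ \<nu> / (u - t))"
proof -
  have u_ne_t: "u - t \<noteq> 0" if "u \<in> rays A" for u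
    using t that by auto
  have split: "t ^ \<nu> * (poly Q u / (u - t)) =
      poly Q u * u ^ \<nu> / (u - t) - (\<Sum>i<\<nu>. t ^ (\<nu> - Suc i) * (poly Q u * u ^ i))"
    if "u \<in> rays A" for u
  proof -
    have "poly Q u * u ^ \<nu> / (u - t) - t ^ \<nu> * (poly Q u / (u - t))
        = poly Q u * (u ^ \<nu> - t ^ \<nu>) / (u - t)"
      by (simp add: diff_divide_distrib right_diff_distrib mult_ac)
    also have "\<dots> = poly Q u * (\<Sum>i<\<nu>. t ^ (\<nu> - Suc i) * u ^ i)"
      unfolding power_diff_sumr2 using u_ne_t[OF that] by simp
    also have "\<dots> = (\<Sum>i<\<nu>. t ^ (\<nu> - Suc i) * (poly Q u * u ^ i))"
      by (simp add: sum_distrib_left mult_ac)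
    finally show ?thesis by (simp add: algebra_simps)
  qed
  have cont_quot: "continuous_on (rays A) (\<lambda>u. poly Q u * u ^ \<nu> / (u - t))"
    using u_ne_t by (auto intro!: continuous_intros)
  have cont_moment: "continuous_on (rays A) (\<lambda>u. t ^ (\<nu> - Suc i) * (poly Q u * u ^ i))" for i
    by (auto intro!: continuous_intros)
  have "t ^ \<nu> * ray_int A s (\<lambda>u. poly Q u / (u - t))
      = ray_int A s (\<lambda>u. poly Q u * u ^ \<nu> / (u - t) - (\<Sum>i<\<nu>. t ^ (\<nu> - Suc i) * (poly Q u * u ^ i)))"
    unfolding ray_int_cmult[symmetric] by (rule ray_int_cong) (rule split)
  also have "\<dots> = ray_int A s (\<lambda>u. poly Q u * u ^ \<nu> / (u - t))
      - (\<Sum>i<\<nu>. t ^ (\<nu> - Suc i) * ray_int A s (\<lambda>u. poly Q u * u ^ i))"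
    using A w cont_quot cont_moment
    by (simp add: ray_int_diff ray_int_sum continuous_on_sum ray_int_cmult)
  also have "\<dots> = ray_int A s (\<lambda>u. poly Q u * u ^ \<nu> / (u - t))"
    using orth by simp
  finally show ?thesis .
qed

lemma ray_int_cauchy_kernel:
  assumes B: "compact B" and w: "integrable lborel (\<lambda>y. indicator B y * s y)"
    and u: "\<And>y. y \<in> B \<Longrightarrow> u ^ 3 \<noteq> complex_of_real y ^ 3"
  shows "ray_int B s (\<lambda>t. 1 / (u - t)) =
    3 * u ^ 2 * (\<integral>y. complex_of_real (indicator B y * s y) / (u ^ 3 - complex_of_real y ^ 3) \<partial>lborel)"
proof -
  have "u - t \<noteq> 0" if "t \<in> rays B" for t
    using rays_cube[OF that] u by force
  then have cont: "continuous_on (rays B) (\<lambda>t. 1 / (u - t))"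
    by (auto intro!: continuous_intros)
  have pointwise: "(\<Sum>j<3. 1 / (u - omega ^ j * complex_of_real y) * complex_of_real (indicator B y * s y))
      = 3 * u ^ 2 * (complex_of_real (indicator B y * s y) / (u ^ 3 - complex_of_real y ^ 3))" for y
  proof (cases "y \<in> B")
    case True
    have "(\<Sum>j<3. 1 / (u - omega ^ j * complex_of_real y) * complex_of_real (s y))
        = (\<Sum>j<3. 1 / (u - omega ^ j * complex_of_real y)) * complex_of_real (s y)"
      by (rule sum_distrib_right[symmetric])
    also have "\<dots> = 3 * u ^ 2 * (complex_of_real (s y) / (u ^ 3 - complex_of_real y ^ 3))"
      unfolding rotation_partial_fractions[OF u[OF True]] by simp
    finally show ?thesis using True by simp
  qed simp
  have "ray_int B s (\<lambda>t. 1 / (u - t)) = (\<integral>y. (\<Sum>j<3.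
      1 / (u - omega ^ j * complex_of_real y) * complex_of_real (indicator B y * s y)) \<partial>lborel)"
    unfolding ray_int_def using ray_integrable[OF B w cont] by (simp add: integral_sum)
  also have "\<dots> = 3 * u ^ 2 *
      (\<integral>y. complex_of_real (indicator B y * s y) / (u ^ 3 - complex_of_real y ^ 3) \<partial>lborel)"
    unfolding pointwise by (rule integral_mult_right_zero)
  finally show ?thesis .
qed

lemma S1_moment_of_Psi_vanishes:
  fixes Q :: "complex poly" and s1 s2 :: "real \<Rightarrow> real"
  assumes a: "0 < a"
    and i1: "integrable lborel (\<lambda>x. indicator {0..\<alpha>} x * s1 x)"
    and i2: "integrable lborel (\<lambda>y. indicator {-b..-a} y * s2 y)"
    and orth: "\<forall>i<\<nu>. S0_int \<alpha> s1 (\<lambda>t. poly Q t * t ^ i) = 0"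
    and orth_f: "S0_int \<alpha> s1 (\<lambda>t. poly Q t * t ^ \<nu> * f_fun a b s2 t) = 0"
  shows "S1_int a b s2 (\<lambda>t. t ^ \<nu> * Psi \<alpha> s1 Q t) = 0"
proof -
  define A where "A = {0..\<alpha>}"
  define B where "B = {-b..-a}"
  define K where "K = (\<lambda>u t. poly Q u * u ^ \<nu> * (1 / (u - t)))"
  have compact: "compact A" "compact B" unfolding A_def B_def by auto
  have signs: "A \<subseteq> {0..}" "B \<subseteq> {..<0}"
    unfolding A_def B_def using a by auto
  have separated: "u ^ 3 \<noteq> t ^ 3" if "u \<in> rays A" "t \<in> rays B" for u t
    by (rule rays_cubes_differ[OF signs that])
  have "S1_int a b s2 (\<lambda>t. t ^ \<nu> * Psi \<alpha> s1 Q t) = ray_int B s2 (\<lambda>t. ray_int A s1 (\<lambda>u. K u t))"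
    unfolding S1_int_eq_ray_int B_def[symmetric]
  proof (rule ray_int_cong)
    fix t assume "t \<in> rays B"
    then have "t \<notin> rays A" using separated by blast
    then show "t ^ \<nu> * Psi \<alpha> s1 Q t = ray_int A s1 (\<lambda>u. K u t)"
      using moment_shift[OF compact(1) i1[folded A_def]] orth
      unfolding Psi_def S0_int_eq_ray_int A_def[symmetric] K_def by simp
  qed
  also have "\<dots> = ray_int A s1 (\<lambda>u. ray_int B s2 (\<lambda>t. K u t))"
  proof (rule ray_int_swap[OF compact i1[folded A_def] i2[folded B_def]])
    have "fst p \<noteq> snd p" if "p \<in> rays A \<times> rays B" for p
      using separated that by fastforce
    then show "continuous_on (rays A \<times> rays B) (\<lambda>p. K (fst p) (snd p))"
      unfolding K_def by (auto intro!: continuous_intros)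
  qed
  also have "\<dots> = ray_int A s1 (\<lambda>u. 3 * (poly Q u * u ^ \<nu> * f_fun a b s2 u))"
  proof (rule ray_int_cong)
    fix u assume "u \<in> rays A"
    then have "u ^ 3 \<noteq> complex_of_real y ^ 3" if "y \<in> B" for y
      using separated ray_memberI[OF that, of 0] by simp
    then show "ray_int B s2 (\<lambda>t. K u t) = 3 * (poly Q u * u ^ \<nu> * f_fun a b s2 u)"
      using ray_int_cauchy_kernel[OF compact(2) i2[folded B_def]]
      unfolding K_def ray_int_cmult f_fun_eq B_def[symmetric] by simp
  qed
  also have "\<dots> = 0"
    using orth_f unfolding ray_int_cmult S0_int_eq_ray_int A_def by simp
  finally show ?thesis .
qed

theorem proposition2p1:
  fixes \<alpha> a b :: real and s1 s2 :: "real \<Rightarrow> real" and n \<nu> :: nat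
    and Q0 Q1 :: "complex poly"
  assumes "0 < \<alpha>" and "0 < a" and "a < b"
    and "\<forall>x\<in>{0<..<\<alpha>}. s1 x \<ge> 0"
    and "set_integrable lborel {0<..<\<alpha>} s1"
    and "\<not> (AE x in lborel. x \<in> {0<..<\<alpha>} \<longrightarrow> s1 x = 0)"
    and "\<forall>x\<in>{-b..-a}. s2 x \<ge> 0"
    and "set_integrable lborel {-b..-a} s2"
    and "\<not> (AE x in lborel. x \<in> {-b..-a} \<longrightarrow> s2 x = 0)"
    and "is_Q_even \<alpha> a b s1 s2 n Q0"
    and "is_Q_odd \<alpha> a b s1 s2 n Q1"
    and "1 \<le> n" and "\<nu> < n"
  shows "S1_int a b s2 (\<lambda>t. t ^ \<nu> * Psi \<alpha> s1 Q0 t) = 0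
       \<and> S1_int a b s2 (\<lambda>t. t ^ \<nu> * Psi \<alpha> s1 Q1 t) = 0"
proof -
  have i1: "integrable lborel (\<lambda>x. indicator {0..\<alpha>} x * s1 x)"
    using assms(5) by (rule integrable_closed_interval)
  have i2: "integrable lborel (\<lambda>y. indicator {-b..-a} y * s2 y)"
    using assms(8) unfolding set_integrable_def by simp
  have "Q_even_cond \<alpha> a b s1 s2 n Q0" "Q_odd_cond \<alpha> a b s1 s2 n Q1"
    using assms(10,11) unfolding is_Q_even_def is_Q_odd_def by blast+
  then show ?thesis
    using S1_moment_of_Psi_vanishes[OF assms(2) i1 i2] assms(13)
    unfolding Q_even_cond_def Q_odd_cond_def by auto
qed

end
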